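(* Let $(M,\mathcal{A},\nu)$ be a standard finite measure space, let $\mathcal{B}$ be a standard sub-$\sigma$-algebra of $\mathcal{A}$, and let $X$ be a nonnegative internal ${}^*\mathcal{A}$-measurable function on ${}^*M$. Suppose that for every real $\epsilon>0$ there exists a real $k$ such that $${}^*E(X; X\ge k)\;\equiv\;{}^*\!\!\int_{\{X\ge k\}} X\,d\,{}^*\nu \;<\;\epsilon .$$ Then there exists a standard nonnegative $\nu$-integrable function $X^\infty$ on $M$, unique up to $\nu$-a.e. equality, such that for every (standard) $A\in\mathcal{A}$ and every (standard) bounded $\mathcal{A}$-measurable function $Y$ on $M$: $$E(X^\infty;A)\simeq {}^*E(X;{}^*A),\qquad E(YX^\infty;A)\simeq {}^*E({}^*Y\,X;{}^*A),\qquad E\big(E(X^\infty\mid\mathcal{B});A\big)\simeq {}^*E\big({}^*E(X\mid{}^*\mathcal{B});{}^*A\big).$$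
   Context: We work in nonstandard analysis: a nonstandard extension ${}^*$ of a sufficiently large universe satisfying the Transfer Principle and the Concurrence (saturation/enlargement) Principle. Objects of the original universe are called standard; ${}^*a$ denotes the nonstandard extension of $a$; ${}^*\nu$, ${}^*\mathcal{A}$, ${}^*\int$, ${}^*E$ denote the transferred measure, $\sigma$-algebra, integral, expectation and conditional expectation. For hyperreals $a,b$, $a\simeq b$ means $a-b$ is infinitesimal. For a measurable set $A$ and integrable $Z$, $E(Z;A)=\int_A Z\,d\nu$ (for a finite measure, "expectation" means integral w.r.t. $\nu$); similarly ${}^*E(Z;{}^*A)$ is the internal integral over ${}^*A$. $E(\cdot\mid\mathcal{B})$ is conditional expectation with respect to $\mathcal{B}$ (relative to $\nu$). *)

theory Defs
  imports "HOL-Probability.Probability"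
begin

text \<open>Ultrapower model of the nonstandard extension: the index set is the type 'i
  and U is an ultrafilter on it. A hyperreal is represented by a function 'i => real
  (modulo U-a.e. equality); an internal function on *M by a family 'i => M => real;
  internal integrals/conditional expectations are computed coordinatewise.\<close>

definition is_ultrafilter :: "'i filter \<Rightarrow> bool" where
  "is_ultrafilter U \<longleftrightarrow> U \<noteq> bot \<and> (\<forall>P. eventually P U \<or> eventually (\<lambda>i. \<not> P i) U)"

definition ns_approx :: "'i filter \<Rightarrow> real \<Rightarrow> ('i \<Rightarrow> real) \<Rightarrow> bool" where
  "ns_approx U r a \<longleftrightarrow> (\<forall>e>0. eventually (\<lambda>i. \<bar>r - a i\<bar> < e) U)"

end

theory Submission
  imports Defs
begin

text \<open>
  For a standard set A the hyperreal integral of X over A is finite, so it has a standard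
  part L(A): the U-limit of the integrals of the X i over A. Uniform integrability gives, for
  every e > 0, a k such that the integral of X i over A is at most k \<nu>(A) + e for U-almost
  all i, so L is finitely additive and dominated by k \<nu> + e. Such a set function is
  continuous at the empty set, hence a finite measure absolutely continuous with respect to
  \<nu>, and X^\<infinity> is its Radon-Nikodym density, unique up to null sets. The convergence
  extends from indicators to a bounded multiplier Y by approximating Y uniformly with the step
  functions d \<lfloor>Y / d\<rfloor>, and to conditional expectations since
  E(E(W | B); A) = E(E(1_A | B) W) with 0 \<le> E(1_A | B) \<le> 1.
\<close>

section \<open>Ultrafilter limits\<close>

lemma ns_approx_iff_tendsto: "ns_approx U r a \<longleftrightarrow> (a \<longlongrightarrow> r) U"
  unfolding ns_approx_def tendsto_iff dist_real_def by (simp add: abs_minus_commute)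

lemma ultrafilter_tendsto_compact:
  fixes a :: "'i \<Rightarrow> 'b::topological_space"
  assumes ultra: "is_ultrafilter U" and "compact S" and "eventually (\<lambda>i. a i \<in> S) U"
  shows "\<exists>r. (a \<longlongrightarrow> r) U"
proof -
  have "filtermap a U \<noteq> bot"
    using ultra by (simp add: is_ultrafilter_def filtermap_bot_iff)
  moreover have "eventually (\<lambda>y. y \<in> S) (filtermap a U)"
    using assms(3) by (simp add: eventually_filtermap)
  ultimately obtain r where r: "inf (nhds r) (filtermap a U) \<noteq> bot"
    using \<open>compact S\<close> unfolding compact_filter by blast
  have "eventually (\<lambda>i. a i \<in> V) U" if "open V" "r \<in> V" for V
  proof (rule ccontr)
    assume "\<not> eventually (\<lambda>i. a i \<in> V) U"
    then have "eventually (\<lambda>y. y \<notin> V) (filtermap a U)"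
      using ultra unfolding is_ultrafilter_def eventually_filtermap by blast
    moreover have "eventually (\<lambda>y. y \<in> V) (nhds r)"
      using that by (rule eventually_nhds_in_open)
    ultimately have "eventually (\<lambda>_. False) (inf (nhds r) (filtermap a U))"
      unfolding eventually_inf by blast
    with r show False
      by (simp add: eventually_False)
  qed
  then show ?thesis
    unfolding tendsto_def by blast
qed

lemma ultrafilter_tendsto_Lim:
  fixes a :: "'i \<Rightarrow> real"
  assumes ultra: "is_ultrafilter U" and bounded: "eventually (\<lambda>i. \<bar>a i\<bar> \<le> K) U"
  shows "(a \<longlongrightarrow> Lim U a) U"
proof -
  have "eventually (\<lambda>i. a i \<in> {-K..K}) U"
    using bounded by eventually_elim (simp add: abs_le_iff)
  then obtain r where "(a \<longlongrightarrow> r) U"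
    using ultrafilter_tendsto_compact[OF ultra compact_Icc] by blast
  moreover have "U \<noteq> bot"
    using ultra by (simp add: is_ultrafilter_def)
  ultimately show ?thesis
    using tendsto_Lim by metis
qed

section \<open>Uniform integrability\<close>

lemma set_integral_nonneg:
  fixes f :: "'a \<Rightarrow> real"
  assumes "\<forall>x\<in>space M. 0 \<le> f x"
  shows "0 \<le> (LINT x:A|M. f x)"
  using assms unfolding set_lebesgue_integral_def
  by (intro integral_nonneg_AE AE_I2) (auto simp: indicator_def)

text \<open>The e-k form of uniform integrability of a nonnegative family (for almost all indices
  along F); for a finite measure it is equivalent to the usual one.\<close>

definition unif_integrable_nonneg :: "'a measure \<Rightarrow> 'i filter \<Rightarrow> ('i \<Rightarrow> 'a \<Rightarrow> real) \<Rightarrow> bool" where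
  "unif_integrable_nonneg M F X \<longleftrightarrow>
    (\<forall>e>0. \<exists>k. eventually (\<lambda>i. integrable M (X i) \<and> (\<forall>x\<in>space M. 0 \<le> X i x)
       \<and> (\<forall>A\<in>sets M. (LINT x:A|M. X i x) \<le> k * measure M A + e)) F)"

lemma (in finite_measure) set_integral_le_tail_bound:
  fixes f :: "'a \<Rightarrow> real"
  assumes f[measurable]: "f \<in> borel_measurable M" and nonneg: "\<forall>x\<in>space M. 0 \<le> f x"
    and tail: "(\<integral>\<^sup>+x\<in>{x\<in>space M. k \<le> f x}. ennreal (f x) \<partial>M) < ennreal e"
  shows "integrable M f \<and> (\<forall>A\<in>sets M. (LINT x:A|M. f x) \<le> max k 0 * measure M A + e)"
proof -
  define T where "T = {x\<in>space M. k \<le> f x}"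
  have [measurable]: "T \<in> sets M"
    unfolding T_def by measurable
  have "0 < e"
    using le_less_trans[OF zero_le tail] by simp
  have nn_bound: "(\<integral>\<^sup>+x\<in>A. ennreal (f x) \<partial>M) \<le> ennreal (max k 0 * measure M A + e)"
    if [measurable]: "A \<in> sets M" for A
  proof -
    have "(\<integral>\<^sup>+x\<in>A. ennreal (f x) \<partial>M)
        \<le> (\<integral>\<^sup>+x. ennreal (max k 0) * indicator A x + ennreal (f x) * indicator T x \<partial>M)"
      by (intro nn_integral_mono) (auto simp: T_def indicator_def add_increasing ennreal_leI)
    also have "\<dots> = ennreal (max k 0) * emeasure M A + (\<integral>\<^sup>+x\<in>T. ennreal (f x) \<partial>M)"
      by (subst nn_integral_add) (auto simp: nn_integral_cmult_indicator)
    also have "\<dots> \<le> ennreal (max k 0 * measure M A) + ennreal e"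
      using tail by (intro add_mono) (auto simp: T_def emeasure_eq_measure ennreal_mult)
    also have "\<dots> = ennreal (max k 0 * measure M A + e)"
      using \<open>0 < e\<close> by (simp add: ennreal_plus)
    finally show ?thesis .
  qed
  have "integrable M f"
    using nn_bound[OF sets.top] nonneg
    by (intro integrableI_nonneg) (auto simp: top_unique less_top[symmetric])
  moreover have "(LINT x:A|M. f x) \<le> max k 0 * measure M A + e" if "A \<in> sets M" for A
  proof -
    have "ennreal (LINT x:A|M. f x) = (\<integral>\<^sup>+x\<in>A. ennreal (f x) \<partial>M)"
      using nonneg that \<open>integrable M f\<close> by (intro nn_set_integral_eq_set_integral[symmetric]) auto
    then have "ennreal (LINT x:A|M. f x) \<le> ennreal (max k 0 * measure M A + e)"
      using nn_bound[OF that] by simp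
    moreover have "0 \<le> max k 0 * measure M A + e"
      using \<open>0 < e\<close> by simp
    ultimately show ?thesis
      by (simp only: ennreal_le_iff)
  qed
  ultimately show ?thesis
    by blast
qed

lemma (in finite_measure) unif_integrable_nonnegI_tail:
  assumes X: "eventually (\<lambda>i. X i \<in> borel_measurable M \<and> (\<forall>x\<in>space M. 0 \<le> X i x)) F"
    and tail: "\<forall>e>0. \<exists>k. eventually (\<lambda>i.
        (\<integral>\<^sup>+x\<in>{x\<in>space M. k \<le> X i x}. ennreal (X i x) \<partial>M) < ennreal e) F"
  shows "unif_integrable_nonneg M F X"
  unfolding unif_integrable_nonneg_def
proof (intro allI impI)
  fix e :: real assume "0 < e"
  then obtain k where "eventually (\<lambda>i.
      (\<integral>\<^sup>+x\<in>{x\<in>space M. k \<le> X i x}. ennreal (X i x) \<partial>M) < ennreal e) F"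
    using tail by blast
  with X have "eventually (\<lambda>i. integrable M (X i) \<and> (\<forall>x\<in>space M. 0 \<le> X i x)
      \<and> (\<forall>A\<in>sets M. (LINT x:A|M. X i x) \<le> max k 0 * measure M A + e)) F"
    by eventually_elim (use set_integral_le_tail_bound in blast)
  then show "\<exists>k. eventually (\<lambda>i. integrable M (X i) \<and> (\<forall>x\<in>space M. 0 \<le> X i x)
      \<and> (\<forall>A\<in>sets M. (LINT x:A|M. X i x) \<le> k * measure M A + e)) F"
    by blast
qed

lemma (in finite_measure) unif_integrable_nonneg_set_integral_bounded:
  assumes "unif_integrable_nonneg M F X"
  shows "\<exists>K. eventually (\<lambda>i. integrable M (X i) \<and> (\<forall>x\<in>space M. 0 \<le> X i x)
    \<and> (\<forall>A\<in>sets M. 0 \<le> (LINT x:A|M. X i x) \<and> (LINT x:A|M. X i x) \<le> K)) F"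
proof -
  obtain k where "eventually (\<lambda>i. integrable M (X i) \<and> (\<forall>x\<in>space M. 0 \<le> X i x)
      \<and> (\<forall>A\<in>sets M. (LINT x:A|M. X i x) \<le> k * measure M A + 1)) F"
    using assms unfolding unif_integrable_nonneg_def by (meson zero_less_one)
  then have "eventually (\<lambda>i. integrable M (X i) \<and> (\<forall>x\<in>space M. 0 \<le> X i x)
      \<and> (\<forall>A\<in>sets M. 0 \<le> (LINT x:A|M. X i x)
        \<and> (LINT x:A|M. X i x) \<le> \<bar>k\<bar> * measure M (space M) + 1)) F"
  proof eventually_elim
    case (elim i)
    have "k * measure M A \<le> \<bar>k\<bar> * measure M (space M)" if "A \<in> sets M" for A
      using that by (intro mult_mono abs_ge_self bounded_measure) auto
    moreover have "0 \<le> (LINT x:A|M. X i x)" for A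
      using elim by (intro set_integral_nonneg) blast
    ultimately show ?case
      using elim by fastforce
  qed
  then show ?thesis
    by blast
qed

lemma (in finite_measure) unif_integrable_nonneg_integral_bounded:
  assumes "unif_integrable_nonneg M F X"
  shows "\<exists>K. eventually (\<lambda>i. integrable M (X i) \<and> (\<forall>x\<in>space M. 0 \<le> X i x)
    \<and> (\<integral>x. X i x \<partial>M) \<le> K) F"
proof -
  obtain K where "eventually (\<lambda>i. integrable M (X i) \<and> (\<forall>x\<in>space M. 0 \<le> X i x)
      \<and> (\<forall>A\<in>sets M. 0 \<le> (LINT x:A|M. X i x) \<and> (LINT x:A|M. X i x) \<le> K)) F"
    using unif_integrable_nonneg_set_integral_bounded[OF assms] by blast
  then have "eventually (\<lambda>i. integrable M (X i) \<and> (\<forall>x\<in>space M. 0 \<le> X i x)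
      \<and> (\<integral>x. X i x \<partial>M) \<le> K) F"
    by eventually_elim (metis sets.top set_integral_space)
  then show ?thesis
    by blast
qed

section \<open>Densities of dominated set functions\<close>

lemma (in finite_measure) Radon_Nikodym_real:
  assumes N: "finite_measure N" "absolutely_continuous M N" "sets N = sets M"
  obtains f where "f \<in> borel_measurable M" "\<forall>x\<in>space M. 0 \<le> f x" "integrable M f"
    "\<And>A. A \<in> sets M \<Longrightarrow> (LINT x:A|M. f x) = measure N A"
proof -
  obtain g where g[measurable]: "g \<in> borel_measurable M" and "density M g = N"
    using Radon_Nikodym[OF N(2,3)] by blast
  then have g_N: "(\<integral>\<^sup>+x\<in>A. g x \<partial>M) = emeasure N A" if "A \<in> sets M" for A
    using emeasure_density[OF g that] by simp
  have space_N: "space N = space M"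
    using N(3) by (rule sets_eq_imp_space_eq)
  have "AE x in M. g x \<noteq> \<infinity>"
    using g_N[OF sets.top] finite_measure.emeasure_finite[OF N(1), of "space N"]
    by (intro nn_integral_PInf_AE) (simp_all add: space_N)
  define f where "f x = enn2real (g x)" for x
  have [measurable]: "f \<in> borel_measurable M"
    unfolding f_def by measurable
  have f_nonneg: "\<forall>x\<in>space M. 0 \<le> f x"
    by (simp add: f_def)
  have f_N: "(\<integral>\<^sup>+x\<in>A. ennreal (f x) \<partial>M) = emeasure N A" if "A \<in> sets M" for A
    unfolding g_N[OF that, symmetric] using \<open>AE x in M. g x \<noteq> \<infinity>\<close>
    by (intro nn_integral_cong_AE) (auto simp: f_def less_top)
  have "integrable M f"
    using f_N[OF sets.top] finite_measure.emeasure_finite[OF N(1), of "space N"] f_nonneg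
    by (intro integrableI_nonneg) (auto simp: space_N less_top)
  moreover have "(LINT x:A|M. f x) = measure N A" if "A \<in> sets M" for A
  proof -
    have "ennreal (LINT x:A|M. f x) = (\<integral>\<^sup>+x\<in>A. ennreal (f x) \<partial>M)"
      using f_nonneg that \<open>integrable M f\<close> by (intro nn_set_integral_eq_set_integral[symmetric]) auto
    also have "\<dots> = ennreal (measure N A)"
      using f_N[OF that] finite_measure.emeasure_eq_measure[OF N(1)] by simp
    finally have "ennreal (LINT x:A|M. f x) = ennreal (measure N A)" .
    moreover have "0 \<le> (LINT x:A|M. f x)"
      using f_nonneg by (rule set_integral_nonneg)
    ultimately show ?thesis
      by (simp add: ennreal_inj)
  qed
  ultimately show ?thesis
    using that f_nonneg by blast
qed

definition dominated_additive :: "'a measure \<Rightarrow> ('a set \<Rightarrow> real) \<Rightarrow> bool" where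
  "dominated_additive M L \<longleftrightarrow> (\<forall>A\<in>sets M. 0 \<le> L A)
    \<and> (\<forall>A\<in>sets M. \<forall>C\<in>sets M. A \<inter> C = {} \<longrightarrow> L (A \<union> C) = L A + L C)
    \<and> (\<forall>e>0. \<exists>k. \<forall>A\<in>sets M. L A \<le> k * measure M A + e)"

lemma (in finite_measure) dominated_additive_empty_continuous:
  assumes L: "dominated_additive M L"
    and An: "range An \<subseteq> sets M" "decseq An" "(\<Inter>i. An i) = {}"
  shows "(\<lambda>n. L (An n)) \<longlonglongrightarrow> 0"
  unfolding tendsto_iff
proof (intro allI impI)
  fix e :: real assume "0 < e"
  then obtain k where k: "\<forall>A\<in>sets M. L A \<le> k * measure M A + e / 2"
    using L unfolding dominated_additive_def by (meson half_gt_zero)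
  have "(\<lambda>n. measure M (An n)) \<longlonglongrightarrow> measure M (\<Inter>i. An i)"
    using An by (intro Lim_measure_decseq) auto
  then have "(\<lambda>n. k * measure M (An n)) \<longlonglongrightarrow> 0"
    using An(3) by (auto intro: tendsto_mult_right_zero)
  then have "eventually (\<lambda>n. k * measure M (An n) < e / 2) sequentially"
    by (rule order_tendstoD(2)) (use \<open>0 < e\<close> in simp)
  then show "eventually (\<lambda>n. dist (L (An n)) 0 < e) sequentially"
  proof eventually_elim
    case (elim n)
    have "An n \<in> sets M" "0 \<le> L (An n)"
      using An(1) L unfolding dominated_additive_def by auto
    then show ?case
      using elim k by (fastforce simp: dist_real_def)
  qed
qed

lemma (in finite_measure) emeasure_measure_of_dominated_additive:
  assumes "dominated_additive M L" and "A \<in> sets M"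
  shows "emeasure (measure_of (space M) (sets M) (\<lambda>A. ennreal (L A))) A = ennreal (L A)"
proof -
  have nonneg: "\<And>A. A \<in> sets M \<Longrightarrow> 0 \<le> L A"
    and additive: "\<And>A C. A \<in> sets M \<Longrightarrow> C \<in> sets M \<Longrightarrow> A \<inter> C = {} \<Longrightarrow> L (A \<union> C) = L A + L C"
    using assms(1) unfolding dominated_additive_def by blast+
  have "positive (sets M) (\<lambda>A. ennreal (L A))"
    using additive[of "{}" "{}"] by (simp add: positive_def)
  moreover have "countably_additive (sets M) (\<lambda>A. ennreal (L A))"
  proof (rule sets.empty_continuous_imp_countably_additive[OF \<open>positive _ _\<close>])
    show "additive (sets M) (\<lambda>A. ennreal (L A))"
      using additive nonneg by (auto simp: additive_def ennreal_plus)
    fix An :: "nat \<Rightarrow> 'a set"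
    assume "range An \<subseteq> sets M" "decseq An" "(\<Inter>i. An i) = {}"
    with assms(1) have "(\<lambda>n. L (An n)) \<longlonglongrightarrow> 0"
      by (rule dominated_additive_empty_continuous)
    then show "(\<lambda>n. ennreal (L (An n))) \<longlonglongrightarrow> 0"
      using tendsto_ennrealI by fastforce
  qed simp
  ultimately show ?thesis
    using assms(2) by (intro emeasure_measure_of_sigma sets.sigma_algebra_axioms)
qed

lemma (in finite_measure) density_if_dominated_additive:
  assumes L: "dominated_additive M L"
  obtains f where "f \<in> borel_measurable M" "\<forall>x\<in>space M. 0 \<le> f x" "integrable M f"
    "\<And>A. A \<in> sets M \<Longrightarrow> (LINT x:A|M. f x) = L A"
proof -
  define N where "N = measure_of (space M) (sets M) (\<lambda>A. ennreal (L A))"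
  have sets_N: "sets N = sets M"
    by (simp add: N_def)
  have emeasure_N: "emeasure N A = ennreal (L A)" if "A \<in> sets M" for A
    unfolding N_def using L that by (rule emeasure_measure_of_dominated_additive)
  have nonneg: "0 \<le> L A" if "A \<in> sets M" for A
    using L that unfolding dominated_additive_def by blast
  have "finite_measure N"
    using emeasure_N[OF sets.top] sets_eq_imp_space_eq[OF sets_N] by (intro finite_measureI) simp
  moreover have "absolutely_continuous M N"
    unfolding absolutely_continuous_def
  proof
    fix A assume "A \<in> null_sets M"
    then have A: "A \<in> sets M" "measure M A = 0"
      by (auto simp: measure_def)
    have "L A \<le> 0"
    proof (rule field_le_epsilon)
      fix e :: real assume "0 < e"
      then show "L A \<le> 0 + e"
        using L A unfolding dominated_additive_def by force
    qed
    then show "A \<in> null_sets N"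
      using A emeasure_N nonneg[of A] sets_N by (simp add: null_sets_def)
  qed
  moreover have "measure N A = L A" if "A \<in> sets M" for A
    using emeasure_N nonneg that by (simp add: measure_def)
  ultimately show ?thesis
    using Radon_Nikodym_real sets_N that by metis
qed

lemma (in finite_measure) dominated_additive_set_integral_limit:
  assumes "F \<noteq> bot" and UI: "unif_integrable_nonneg M F X"
    and conv: "\<And>A. A \<in> sets M \<Longrightarrow> ((\<lambda>i. LINT x:A|M. X i x) \<longlongrightarrow> L A) F"
  shows "dominated_additive M L"
  unfolding dominated_additive_def
proof (intro conjI ballI allI impI)
  obtain K where K: "eventually (\<lambda>i. integrable M (X i) \<and> (\<forall>x\<in>space M. 0 \<le> X i x)
      \<and> (\<forall>A\<in>sets M. 0 \<le> (LINT x:A|M. X i x) \<and> (LINT x:A|M. X i x) \<le> K)) F"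
    using unif_integrable_nonneg_set_integral_bounded[OF UI] by blast
  show "0 \<le> L A" if "A \<in> sets M" for A
    using K by (rule tendsto_lowerbound[OF conv[OF that] eventually_mono]) (use that \<open>F \<noteq> bot\<close> in auto)
  show "L (A \<union> C) = L A + L C" if "A \<in> sets M" "C \<in> sets M" "A \<inter> C = {}" for A C
  proof -
    have "eventually (\<lambda>i. (LINT x:A|M. X i x) + (LINT x:C|M. X i x) = (LINT x:A \<union> C|M. X i x)) F"
      using K
    proof eventually_elim
      case (elim i)
      then have "integrable M (X i)"
        by blast
      then have "set_integrable M A (X i)" "set_integrable M C (X i)"
        unfolding set_integrable_def
        by (rule integrable_mult_indicator[OF that(1)], rule integrable_mult_indicator[OF that(2)])
      then show ?case
        using that(3) by (simp add: set_integral_Un)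
    qed
    then have "((\<lambda>i. LINT x:A \<union> C|M. X i x) \<longlongrightarrow> L A + L C) F"
      by (rule Lim_transform_eventually[OF tendsto_add[OF conv[OF that(1)] conv[OF that(2)]]])
    then show ?thesis
      by (rule tendsto_unique[OF \<open>F \<noteq> bot\<close> conv[OF sets.Un[OF that(1,2)]]])
  qed
  show "\<exists>k. \<forall>A\<in>sets M. L A \<le> k * measure M A + e" if "0 < e" for e :: real
  proof -
    obtain k where k: "eventually (\<lambda>i. integrable M (X i) \<and> (\<forall>x\<in>space M. 0 \<le> X i x)
        \<and> (\<forall>A\<in>sets M. (LINT x:A|M. X i x) \<le> k * measure M A + e)) F"
      using UI \<open>0 < e\<close> unfolding unif_integrable_nonneg_def by blast
    have "L A \<le> k * measure M A + e" if "A \<in> sets M" for A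
      using k by (rule tendsto_upperbound[OF conv[OF that] eventually_mono]) (use that \<open>F \<noteq> bot\<close> in auto)
    then show ?thesis
      by blast
  qed
qed

lemma (in finite_measure) ultrafilter_limit_density:
  assumes ultra: "is_ultrafilter U" and UI: "unif_integrable_nonneg M U X"
  obtains Z where "Z \<in> borel_measurable M" "\<forall>x\<in>space M. 0 \<le> Z x" "integrable M Z"
    "\<And>A. A \<in> sets M \<Longrightarrow> ((\<lambda>i. LINT x:A|M. X i x) \<longlongrightarrow> (LINT x:A|M. Z x)) U"
proof -
  have "U \<noteq> bot"
    using ultra by (simp add: is_ultrafilter_def)
  obtain K where K: "eventually (\<lambda>i. integrable M (X i) \<and> (\<forall>x\<in>space M. 0 \<le> X i x)
      \<and> (\<forall>A\<in>sets M. 0 \<le> (LINT x:A|M. X i x) \<and> (LINT x:A|M. X i x) \<le> K)) U"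
    using unif_integrable_nonneg_set_integral_bounded[OF UI] by blast
  define L where "L A = Lim U (\<lambda>i. LINT x:A|M. X i x)" for A
  have conv: "((\<lambda>i. LINT x:A|M. X i x) \<longlongrightarrow> L A) U" if "A \<in> sets M" for A
    unfolding L_def using K
    by (intro ultrafilter_tendsto_Lim[OF ultra, where K = K]) (auto elim!: eventually_mono simp: that)
  obtain f where f: "f \<in> borel_measurable M" "\<forall>x\<in>space M. 0 \<le> f x" "integrable M f"
    "\<And>A. A \<in> sets M \<Longrightarrow> (LINT x:A|M. f x) = L A"
    using density_if_dominated_additive[OF dominated_additive_set_integral_limit[OF \<open>U \<noteq> bot\<close> UI conv]]
    by blast
  show ?thesis
  proof (rule that[OF f(1-3)])
    fix A assume "A \<in> sets M"
    then show "((\<lambda>i. LINT x:A|M. X i x) \<longlongrightarrow> (LINT x:A|M. f x)) U"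
      using conv f(4) by simp
  qed
qed

section \<open>Bounded multipliers\<close>

lemma integral_finite_range_mult:
  fixes g :: "'a \<Rightarrow> 'b" and c :: "'b \<Rightarrow> real" and W :: "'a \<Rightarrow> real"
  assumes range: "finite S" "\<forall>x\<in>space M. g x \<in> S"
    and level_sets: "\<And>n. {x\<in>space M. g x = n} \<in> sets M" and W: "integrable M W"
  shows "(\<integral>x. c (g x) * W x \<partial>M) = (\<Sum>n\<in>S. c n * (LINT x:{x\<in>space M. g x = n}|M. W x))"
proof -
  have "(\<integral>x. c (g x) * W x \<partial>M)
      = (\<integral>x. (\<Sum>n\<in>S. c n * (indicator {x\<in>space M. g x = n} x * W x)) \<partial>M)"
  proof (rule Bochner_Integration.integral_cong[OF refl])
    fix x assume x: "x \<in> space M"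
    have "(\<Sum>n\<in>S. c n * (indicator {x\<in>space M. g x = n} x * W x))
        = (\<Sum>n\<in>S. if g x = n then c n * W x else 0)"
      using x by (intro sum.cong) (auto simp: indicator_def)
    then show "c (g x) * W x = (\<Sum>n\<in>S. c n * (indicator {x\<in>space M. g x = n} x * W x))"
      using range x by (simp add: sum.delta')
  qed
  also have "\<dots> = (\<Sum>n\<in>S. c n * (LINT x:{x\<in>space M. g x = n}|M. W x))"
    using integrable_mult_indicator[OF level_sets W]
    by (subst Bochner_Integration.integral_sum) (auto simp: set_lebesgue_integral_def)
  finally show ?thesis .
qed

lemma floor_divide_step_bounds:
  fixes y d :: real
  assumes "0 < d"
  shows "d * of_int \<lfloor>y / d\<rfloor> \<le> y" and "y - d * of_int \<lfloor>y / d\<rfloor> \<le> d"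
proof -
  have "of_int \<lfloor>y / d\<rfloor> * d \<le> y" "y \<le> (of_int \<lfloor>y / d\<rfloor> + 1) * d"
    using assms of_int_floor_le real_of_int_floor_add_one_ge pos_le_divide_eq pos_divide_le_eq
    by metis+
  then show "d * of_int \<lfloor>y / d\<rfloor> \<le> y" "y - d * of_int \<lfloor>y / d\<rfloor> \<le> d"
    by (simp_all add: algebra_simps)
qed

lemma floor_divide_in_range:
  fixes y d C :: real
  assumes "0 < d" and "\<bar>y\<bar> \<le> C"
  shows "\<lfloor>y / d\<rfloor> \<in> {\<lfloor>-C/d\<rfloor>..\<lfloor>C/d\<rfloor>}"
proof -
  have "-C \<le> y" "y \<le> C"
    using assms(2) by (auto simp: abs_le_iff)
  then have "-C / d \<le> y / d" "y / d \<le> C / d"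
    using assms(1) by (intro divide_right_mono; simp)+
  then show ?thesis
    unfolding atLeastAtMost_iff by (blast intro: floor_mono)
qed

lemma integral_mult_floor_approx:
  fixes W Y :: "'a \<Rightarrow> real"
  assumes d: "0 < d" and W: "integrable M W" "\<forall>x\<in>space M. 0 \<le> W x"
    and Y[measurable]: "Y \<in> borel_measurable M" and bound: "\<forall>x\<in>space M. \<bar>Y x\<bar> \<le> C"
  shows "\<bar>(\<integral>x. Y x * W x \<partial>M) - (\<Sum>n\<in>{\<lfloor>-C/d\<rfloor>..\<lfloor>C/d\<rfloor>}.
            d * of_int n * (LINT x:{x\<in>space M. \<lfloor>Y x / d\<rfloor> = n}|M. W x))\<bar>
         \<le> d * (\<integral>x. W x \<partial>M)"
proof -
  have [measurable]: "W \<in> borel_measurable M"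
    using W(1) by auto
  define s where "s x = d * of_int \<lfloor>Y x / d\<rfloor>" for x
  have [measurable]: "s \<in> borel_measurable M"
    unfolding s_def by measurable
  have s_below: "s x \<le> Y x" and s_above: "Y x - s x \<le> d" for x
    unfolding s_def using floor_divide_step_bounds[OF d] by auto
  have "\<lfloor>Y x / d\<rfloor> \<in> {\<lfloor>-C/d\<rfloor>..\<lfloor>C/d\<rfloor>}" if "x \<in> space M" for x
    using floor_divide_in_range[OF d] bound that by blast
  then have step: "(\<integral>x. s x * W x \<partial>M) = (\<Sum>n\<in>{\<lfloor>-C/d\<rfloor>..\<lfloor>C/d\<rfloor>}.
            d * of_int n * (LINT x:{x\<in>space M. \<lfloor>Y x / d\<rfloor> = n}|M. W x))"
    unfolding s_def using W(1)
    by (intro integral_finite_range_mult[where c = "\<lambda>n. d * of_int n"]) auto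
  have YW: "integrable M (\<lambda>x. Y x * W x)"
  proof (rule Bochner_Integration.integrable_bound[of _ "\<lambda>x. C * W x"])
    show "AE x in M. norm (Y x * W x) \<le> norm (C * W x)"
      using W(2) bound by (intro AE_I2) (auto simp: abs_mult intro!: mult_right_mono)
  qed (use W in auto)
  have gap: "integrable M (\<lambda>x. (Y x - s x) * W x)"
  proof (rule Bochner_Integration.integrable_bound[of _ "\<lambda>x. d * W x"])
    show "AE x in M. norm ((Y x - s x) * W x) \<le> norm (d * W x)"
      using W(2) s_below s_above d by (intro AE_I2) (auto simp: abs_mult intro!: mult_right_mono)
  qed (use W in auto)
  have "(\<integral>x. s x * W x \<partial>M) = (\<integral>x. Y x * W x \<partial>M) - (\<integral>x. (Y x - s x) * W x \<partial>M)"
    using YW gap by (simp add: left_diff_distrib flip: Bochner_Integration.integral_diff)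
  moreover have "0 \<le> (\<integral>x. (Y x - s x) * W x \<partial>M)"
    using W s_below by (intro integral_nonneg_AE AE_I2) auto
  moreover have "(\<integral>x. (Y x - s x) * W x \<partial>M) \<le> (\<integral>x. d * W x \<partial>M)"
    using W gap s_above by (intro integral_mono) (auto intro: mult_right_mono)
  ultimately show ?thesis
    using step by simp
qed

lemma tendsto_integral_bounded_mult:
  fixes X :: "'i \<Rightarrow> 'a \<Rightarrow> real" and Y Z :: "'a \<Rightarrow> real"
  assumes X: "eventually (\<lambda>i. integrable M (X i) \<and> (\<forall>x\<in>space M. 0 \<le> X i x) \<and> (\<integral>x. X i x \<partial>M) \<le> K) F"
    and Z: "integrable M Z" "\<forall>x\<in>space M. 0 \<le> Z x"
    and set_conv: "\<And>A. A \<in> sets M \<Longrightarrow> ((\<lambda>i. LINT x:A|M. X i x) \<longlongrightarrow> (LINT x:A|M. Z x)) F"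
    and Y[measurable]: "Y \<in> borel_measurable M" and bound: "\<forall>x\<in>space M. \<bar>Y x\<bar> \<le> C"
  shows "((\<lambda>i. \<integral>x. Y x * X i x \<partial>M) \<longlongrightarrow> (\<integral>x. Y x * Z x \<partial>M)) F"
  unfolding tendsto_iff
proof (intro allI impI)
  fix e :: real assume "0 < e"
  define I where "I = (\<integral>x. Z x \<partial>M)"
  have "0 \<le> I"
    unfolding I_def using Z(2) by (intro integral_nonneg_AE AE_I2) auto
  define d where "d = e / (max K 0 + I + 1)"
  have "0 < max K 0 + I + 1"
    using \<open>0 \<le> I\<close> by linarith
  then have "0 < d" "d * (max K 0 + I + 1) = e"
    using \<open>0 < e\<close> by (simp_all add: d_def)
  then have d: "0 < d" "d * max K 0 + d * I + d = e"
    by (simp_all add: algebra_simps)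
  define approx where "approx W = (\<Sum>n\<in>{\<lfloor>-C/d\<rfloor>..\<lfloor>C/d\<rfloor>}.
      d * of_int n * (LINT x:{x\<in>space M. \<lfloor>Y x / d\<rfloor> = n}|M. W x))" for W :: "'a \<Rightarrow> real"
  have Z_approx: "\<bar>(\<integral>x. Y x * Z x \<partial>M) - approx Z\<bar> \<le> d * I"
    unfolding approx_def I_def using integral_mult_floor_approx[OF d(1) Z Y bound] .
  have "((\<lambda>i. approx (X i)) \<longlongrightarrow> approx Z) F"
    unfolding approx_def by (intro tendsto_intros set_conv) measurable
  then have "eventually (\<lambda>i. \<bar>approx (X i) - approx Z\<bar> < d) F"
    using d(1) unfolding tendsto_iff dist_real_def by blast
  then show "eventually (\<lambda>i. dist (\<integral>x. Y x * X i x \<partial>M) (\<integral>x. Y x * Z x \<partial>M) < e) F"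
    using X
  proof eventually_elim
    case (elim i)
    then have "\<bar>(\<integral>x. Y x * X i x \<partial>M) - approx (X i)\<bar> \<le> d * (\<integral>x. X i x \<partial>M)"
      unfolding approx_def using integral_mult_floor_approx[OF d(1) _ _ Y bound] by blast
    moreover have "d * (\<integral>x. X i x \<partial>M) \<le> d * max K 0"
      using elim d(1) by (intro mult_left_mono) auto
    ultimately show ?case
      using elim d Z_approx unfolding dist_real_def by linarith
  qed
qed

lemma tendsto_set_integral_bounded_mult:
  fixes X :: "'i \<Rightarrow> 'a \<Rightarrow> real" and Y Z :: "'a \<Rightarrow> real"
  assumes X: "eventually (\<lambda>i. integrable M (X i) \<and> (\<forall>x\<in>space M. 0 \<le> X i x) \<and> (\<integral>x. X i x \<partial>M) \<le> K) F"
    and Z: "integrable M Z" "\<forall>x\<in>space M. 0 \<le> Z x"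
    and set_conv: "\<And>A. A \<in> sets M \<Longrightarrow> ((\<lambda>i. LINT x:A|M. X i x) \<longlongrightarrow> (LINT x:A|M. Z x)) F"
    and Y[measurable]: "Y \<in> borel_measurable M" and bound: "\<forall>x\<in>space M. \<bar>Y x\<bar> \<le> C"
    and A[measurable]: "A \<in> sets M"
  shows "((\<lambda>i. LINT x:A|M. Y x * X i x) \<longlongrightarrow> (LINT x:A|M. Y x * Z x)) F"
proof -
  have "(\<lambda>x. indicator A x * Y x) \<in> borel_measurable M"
    by measurable
  moreover have "\<forall>x\<in>space M. \<bar>indicator A x * Y x\<bar> \<le> max C 0"
    using bound by (force simp: indicator_def intro: max.coboundedI1)
  ultimately have "((\<lambda>i. \<integral>x. (indicator A x * Y x) * X i x \<partial>M) \<longlongrightarrow> (\<integral>x. (indicator A x * Y x) * Z x \<partial>M)) F"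
    using tendsto_integral_bounded_mult[OF X Z set_conv] by blast
  then show ?thesis
    by (simp add: set_lebesgue_integral_def mult.assoc)
qed

section \<open>Conditional expectations\<close>

lemma (in finite_measure_subalgebra) real_cond_exp_indicator_bounds:
  assumes [measurable]: "A \<in> sets M"
  shows "AE x in M. 0 \<le> real_cond_exp M F (indicator A) x \<and> real_cond_exp M F (indicator A) x \<le> 1"
proof -
  have indicator_integrable: "integrable M (indicator A :: 'a \<Rightarrow> real)"
    by (simp add: less_top[symmetric])
  have "AE x in M. 0 \<le> real_cond_exp M F (indicator A) x"
    by (rule real_cond_exp_pos) auto
  moreover have "AE x in M. real_cond_exp M F (indicator A) x \<le> real_cond_exp M F (\<lambda>_. 1) x"
    by (rule real_cond_exp_mono[OF _ indicator_integrable]) (auto simp: indicator_def)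
  moreover have "AE x in M. real_cond_exp M F (\<lambda>_. 1) x = 1"
    by (rule real_cond_exp_F_meas) auto
  ultimately show ?thesis
    by eventually_elim auto
qed

lemma (in finite_measure_subalgebra) set_integral_real_cond_exp:
  fixes W :: "'a \<Rightarrow> real"
  assumes A[measurable]: "A \<in> sets M" and W: "integrable M W"
  shows "(LINT x:A|M. real_cond_exp M F W x) = (\<integral>x. real_cond_exp M F (indicator A) x * W x \<partial>M)"
proof -
  define E where "E = real_cond_exp M F (indicator A)"
  have [measurable]: "W \<in> borel_measurable M" "E \<in> borel_measurable F"
    using W by (auto simp: E_def)
  have "(\<integral>x. real_cond_exp M F W x * E x \<partial>M) = (\<integral>x. real_cond_exp M F W x * indicator A x \<partial>M)"
    unfolding E_def using integrable_real_mult_indicator[OF A real_cond_exp_int(1)[OF W]]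
    by (rule real_cond_exp_intg(2)) measurable
  then have "(LINT x:A|M. real_cond_exp M F W x) = (\<integral>x. E x * real_cond_exp M F W x \<partial>M)"
    by (simp add: set_lebesgue_integral_def mult.commute)
  also have "\<dots> = (\<integral>x. E x * W x \<partial>M)"
  proof (rule real_cond_exp_intg(2))
    show "integrable M (\<lambda>x. E x * W x)"
      using real_cond_exp_indicator_bounds[OF A] measurable_from_subalg[OF subalg]
      by (intro Bochner_Integration.integrable_bound[OF W])
         (auto simp: E_def abs_mult intro!: mult_left_le_one_le)
  qed measurable
  finally show ?thesis
    unfolding E_def .
qed

lemma (in finite_measure_subalgebra) tendsto_set_integral_real_cond_exp:
  fixes X :: "'i \<Rightarrow> 'a \<Rightarrow> real" and Z :: "'a \<Rightarrow> real" and U :: "'i filter"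
  assumes X: "eventually (\<lambda>i. integrable M (X i) \<and> (\<forall>x\<in>space M. 0 \<le> X i x) \<and> (\<integral>x. X i x \<partial>M) \<le> K) U"
    and Z: "integrable M Z" "\<forall>x\<in>space M. 0 \<le> Z x"
    and set_conv: "\<And>A. A \<in> sets M \<Longrightarrow> ((\<lambda>i. LINT x:A|M. X i x) \<longlongrightarrow> (LINT x:A|M. Z x)) U"
    and A: "A \<in> sets M"
  shows "((\<lambda>i. LINT x:A|M. real_cond_exp M F (X i) x) \<longlongrightarrow> (LINT x:A|M. real_cond_exp M F Z x)) U"
proof -
  \<comment> \<open>The conditional expectation of the indicator lies in [0, 1] only almost everywhere;
    clipping it gives a multiplier that is bounded everywhere.\<close>
  define Y where "Y x = max 0 (min 1 (real_cond_exp M F (indicator A) x))" for x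
  have [measurable]: "real_cond_exp M F (indicator A) \<in> borel_measurable M"
    by (rule measurable_from_subalg[OF subalg]) simp
  have Y: "(\<integral>x. Y x * W x \<partial>M) = (LINT x:A|M. real_cond_exp M F W x)" if "integrable M W" for W
  proof -
    have "AE x in M. Y x * W x = real_cond_exp M F (indicator A) x * W x"
      using real_cond_exp_indicator_bounds[OF A] by eventually_elim (simp add: Y_def)
    then have "(\<integral>x. Y x * W x \<partial>M) = (\<integral>x. real_cond_exp M F (indicator A) x * W x \<partial>M)"
      using that by (intro integral_cong_AE) (auto simp: Y_def)
    then show ?thesis
      using set_integral_real_cond_exp[OF A that] by simp
  qed
  have "Y \<in> borel_measurable M"
    unfolding Y_def by measurable
  moreover have "\<forall>x\<in>space M. \<bar>Y x\<bar> \<le> 1"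
    by (simp add: Y_def)
  ultimately have "((\<lambda>i. \<integral>x. Y x * X i x \<partial>M) \<longlongrightarrow> (\<integral>x. Y x * Z x \<partial>M)) U"
    using tendsto_integral_bounded_mult[OF X Z set_conv] by blast
  moreover have "eventually (\<lambda>i. (\<integral>x. Y x * X i x \<partial>M) = (LINT x:A|M. real_cond_exp M F (X i) x)) U"
    using X by eventually_elim (simp add: Y)
  ultimately show ?thesis
    unfolding Y[OF Z(1)] by (rule Lim_transform_eventually)
qed

theorem lemma1:
  fixes M B :: "'a measure" and U :: "'i filter" and X :: "'i \<Rightarrow> 'a \<Rightarrow> real"
  assumes ultra: "is_ultrafilter U"
    and fin: "finite_measure M"
    and sub: "subalgebra M B"
    and internal: "eventually (\<lambda>i. X i \<in> borel_measurable M \<and> (\<forall>x\<in>space M. 0 \<le> X i x)) U"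
    and unif: "\<forall>e::real>0. \<exists>k::real. eventually (\<lambda>i.
        (\<integral>\<^sup>+x\<in>{x\<in>space M. k \<le> X i x}. ennreal (X i x) \<partial>M) < ennreal e) U"
  shows "\<exists>Xinf. (\<lambda>Z. Z \<in> borel_measurable M \<and> integrable M Z \<and> (\<forall>x\<in>space M. 0 \<le> Z x)
        \<and> (\<forall>A\<in>sets M. ns_approx U (LINT x:A|M. Z x) (\<lambda>i. LINT x:A|M. X i x))
        \<and> (\<forall>A\<in>sets M. \<forall>Y. Y \<in> borel_measurable M \<and> (\<exists>C. \<forall>x\<in>space M. \<bar>Y x\<bar> \<le> C) \<longrightarrow>
             ns_approx U (LINT x:A|M. Y x * Z x) (\<lambda>i. LINT x:A|M. Y x * X i x))
        \<and> (\<forall>A\<in>sets M. ns_approx U (LINT x:A|M. real_cond_exp M B Z x)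
             (\<lambda>i. LINT x:A|M. real_cond_exp M B (X i) x))) Xinf
      \<and> (\<forall>Z. (Z \<in> borel_measurable M \<and> integrable M Z \<and> (\<forall>x\<in>space M. 0 \<le> Z x)
        \<and> (\<forall>A\<in>sets M. ns_approx U (LINT x:A|M. Z x) (\<lambda>i. LINT x:A|M. X i x))
        \<and> (\<forall>A\<in>sets M. \<forall>Y. Y \<in> borel_measurable M \<and> (\<exists>C. \<forall>x\<in>space M. \<bar>Y x\<bar> \<le> C) \<longrightarrow>
             ns_approx U (LINT x:A|M. Y x * Z x) (\<lambda>i. LINT x:A|M. Y x * X i x))
        \<and> (\<forall>A\<in>sets M. ns_approx U (LINT x:A|M. real_cond_exp M B Z x)
             (\<lambda>i. LINT x:A|M. real_cond_exp M B (X i) x)))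
        \<longrightarrow> (AE x in M. Z x = Xinf x))"
proof -
  interpret finite_measure_subalgebra M B
    using fin sub by (simp add: finite_measure_subalgebra_def finite_measure_subalgebra_axioms_def)
  have UI: "unif_integrable_nonneg M U X"
    by (rule unif_integrable_nonnegI_tail[OF internal unif])
  obtain Xinf where Xinf: "Xinf \<in> borel_measurable M" "\<forall>x\<in>space M. 0 \<le> Xinf x" "integrable M Xinf"
    and conv: "\<And>A. A \<in> sets M \<Longrightarrow> ((\<lambda>i. LINT x:A|M. X i x) \<longlongrightarrow> (LINT x:A|M. Xinf x)) U"
    using ultrafilter_limit_density[OF ultra UI] by blast
  obtain K where K: "eventually (\<lambda>i. integrable M (X i) \<and> (\<forall>x\<in>space M. 0 \<le> X i x)
      \<and> (\<integral>x. X i x \<partial>M) \<le> K) U"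
    using unif_integrable_nonneg_integral_bounded[OF UI] by blast
  have "U \<noteq> bot"
    using ultra by (simp add: is_ultrafilter_def)
  have unique: "AE x in M. Z x = Xinf x"
    if "integrable M Z" "\<forall>A\<in>sets M. ns_approx U (LINT x:A|M. Z x) (\<lambda>i. LINT x:A|M. X i x)" for Z
    using that(1) Xinf(3)
  proof (rule density_unique_real)
    fix A assume "A \<in> sets M"
    then show "(LINT x:A|M. Z x) = (LINT x:A|M. Xinf x)"
      using that(2) conv tendsto_unique[OF \<open>U \<noteq> bot\<close>] unfolding ns_approx_iff_tendsto by blast
  qed
  show ?thesis
    unfolding ns_approx_iff_tendsto
    using Xinf conv unique[unfolded ns_approx_iff_tendsto]
      tendsto_set_integral_bounded_mult[OF K Xinf(3,2) conv]
      tendsto_set_integral_real_cond_exp[OF K Xinf(3,2) conv]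
    by (intro exI[of _ Xinf]) blast
qed

end
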